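(* Let $q$ be a prime power, $m\ge1$, $1\le k\le n$, $g_1,\dots,g_n\in\mathbb{F}_{q^m}$ linearly independent over $\mathbb{F}_q$, $C$ the Gabidulin code defined below and $\mathbf r\in\mathbb{F}_{q^m}^n$ a received word within the unique decoding radius, i.e. $t:=\min_{\mathbf c\in C}d_R(\mathbf c,\mathbf r)\le(n-k)/2$. Then Algorithm 1 (described in the context) performs only one iteration of its while-loop and hence only one symbolic division to find the message polynomial corresponding to the unique closest codeword.
   Context: Write $[i]:=q^i$. A $q$-linearized polynomial is $f(x)=\sum_{i=0}^{d}a_ix^{[i]}$, $a_i\in\mathbb{F}_{q^m}$; if $a_d\neq0$ then $d=\mathrm{qdeg}(f)$ ($\mathrm{qdeg}(0)=-\infty$), and $f$ is monic if $a_d=1$. $\mathcal{L}_q(x,q^m)$ is the ring of these under addition and composition $\circ$. $\Pi_{\mathbf g}(x)=\prod_{u\in\langle g_1,\dots,g_n\rangle}(x-u)$ ($\mathbb{F}_q$-span), of $q$-degree $n$; $\Lambda_{\mathbf g,\mathbf r}(x)=\sum_{i=1}^n(-1)^{n-i}r_i\det(\mathfrak D_i(\mathbf g,x))/\det(M_n(g_1,\dots,g_n))$ ($M_n(v_1,\dots,v_s)$ the $n\times s$ matrix with $(j,l)$ entry $v_l^{[j-1]}$, $\mathfrak D_i(\mathbf g,x)$ equal to $M_n(g_1,\dots,g_n,x)$ without column $i$), with $\Lambda_{\mathbf g,\mathbf r}(g_i)=r_i$. $C=\{(m(g_1),\dots,m(g_n)):m\in\mathcal{L}_q(x,q^m),\mathrm{qdeg}(m)<k\}$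 ($m$ the message polynomial). $d_R(\mathbf a,\mathbf b)$ is the $\mathbb{F}_q$-rank of the $m\times n$ $\mathbb{F}_q$-matrix expanding the coordinates of $\mathbf a-\mathbf b$ over a fixed $\mathbb{F}_q$-basis of $\mathbb{F}_{q^m}$. $\mathfrak M(\mathbf r)=\{\beta\circ[\Pi_{\mathbf g}\ \ 0]+\gamma\circ[-\Lambda_{\mathbf g,\mathbf r}\ \ x]:\beta,\gamma\in\mathcal{L}_q(x,q^m)\}$ with $h\circ[f_1\ f_2]=[h\circ f_1\ \ h\circ f_2]$. $(0,k-1)$-weighted term-over-position order on monomials $x^{[i]}e_j$: with $w_1=0,w_2=k-1$, $x^{[i_1]}e_{j_1}<x^{[i_2]}e_{j_2}$ iff $i_1+w_{j_1}<i_2+w_{j_2}$, or equality and $j_1<j_2$; $\mathrm{lm}$, $\mathrm{lt}$, $\mathrm{lpos}$ are the greatest monomial, its term, its coordinate; the weighted $q$-degree of $[f_1\ f_2]$ is $\max\{\mathrm{qdeg}f_1,\mathrm{qdeg}f_2+k-1\}$. A basis is a generating set with $\sum a_i\circ f^{(i)}=0\Rightarrow a_i=0$; it is minimal if no element $b$ reduces modulo the others, where $f$ reduces modulo $F$ in one step if $f-\sum_i(b_ix^{[a_i]})\circ f^{(i)}$ with $f^{(i)}\in F$, $\mathrm{lm}(f)=x^{[a_i]}\circ\mathrm{lm}(f^{(i)})$ and $\mathrm{lt}(f)=\sum_i(b_ix^{[a_i]})\circ\mathrm{lt}(f^{(i)})$. Algorithm 1: (1) compute $\Pi_{\mathbf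 g},\Lambda_{\mathbf g,\mathbf r}$; (2) compute a minimal basis $\{b^{(1)},b^{(2)}\}$ of $\mathfrak M(\mathbf r)$ w.r.t. the $(0,k-1)$-weighted order with $\mathrm{lpos}(b^{(1)})=1$, $\mathrm{lpos}(b^{(2)})=2$; (3) let $\ell_1,\ell_2$ be their weighted $q$-degrees; (4) list $:=$ empty, $j:=0$; while list is empty: for all $\beta\in\mathcal{L}_q(x,q^m)$ with $\mathrm{qdeg}(\beta)\le\ell_2-\ell_1+j$ and all monic $\gamma$ with $\mathrm{qdeg}(\gamma)=j$, let $[f_1\ f_2]:=\beta\circ b^{(1)}+\gamma\circ b^{(2)}$, and if some $m\in\mathcal{L}_q(x,q^m)$ satisfies $f_1=-f_2\circ m$ (checked by a symbolic division), add $m$ to the list; $j:=j+1$. Return the list. *)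

theory Defs
  imports "HOL-Computational_Algebra.Polynomial" "Jordan_Normal_Form.Determinant"
begin

(* Ambient field F_{q^m} is a finite field type 'a with CARD('a) = q^m;
   the subfield F_q is the fixed field of x |-> x^q. *)
definition Fq :: "nat \<Rightarrow> 'a::field set" where
  "Fq q = {x. x ^ q = x}"

(* q-linearized polynomials, represented as genuine polynomials whose only
   nonzero coefficients sit at exponents q^i;  composition is pcompose. *)
definition linearized :: "nat \<Rightarrow> 'a::field poly \<Rightarrow> bool" where
  "linearized q f \<longleftrightarrow> (\<forall>i. coeff f i \<noteq> 0 \<longrightarrow> (\<exists>j. i = q ^ j))"

definition qdeg :: "nat \<Rightarrow> 'a::field poly \<Rightarrow> nat" where
  "qdeg q f = (THE d. degree f = q ^ d)"

(* qdeg f \<le> D, with qdeg 0 = -\<infinity> *)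
definition qdeg_le :: "nat \<Rightarrow> 'a::field poly \<Rightarrow> int \<Rightarrow> bool" where
  "qdeg_le q f D \<longleftrightarrow> f = 0 \<or> int (qdeg q f) \<le> D"

definition qmonom :: "nat \<Rightarrow> nat \<Rightarrow> 'a::field poly" where
  "qmonom q i = monom 1 (q ^ i)"

definition Fq_span :: "nat \<Rightarrow> nat \<Rightarrow> (nat \<Rightarrow> 'a::field) \<Rightarrow> 'a set" where
  "Fq_span q n g = {(\<Sum>i<n. c i * g i) | c. \<forall>i<n. c i \<in> Fq q}"

definition Fq_lin_indep :: "nat \<Rightarrow> nat \<Rightarrow> (nat \<Rightarrow> 'a::field) \<Rightarrow> bool" where
  "Fq_lin_indep q n g \<longleftrightarrow>
     (\<forall>c. (\<forall>i<n. c i \<in> Fq q) \<and> (\<Sum>i<n. c i * g i) = 0 \<longrightarrow> (\<forall>i<n. c i = 0))"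

definition Pi_g :: "nat \<Rightarrow> nat \<Rightarrow> (nat \<Rightarrow> 'a::field) \<Rightarrow> 'a poly" where
  "Pi_g q n g = (\<Prod>u\<in>Fq_span q n g. [:- u, 1:])"

(* Moore matrix M_n(g_0..g_{n-1}) (0-based indices): entry (j,l) = g_l^{[j]} *)
definition moore :: "nat \<Rightarrow> nat \<Rightarrow> (nat \<Rightarrow> 'a::field) \<Rightarrow> 'a mat" where
  "moore q n g = mat n n (\<lambda>(j, l). g l ^ (q ^ j))"

(* \<frak>D_i(g,x): the n x (n+1) matrix M_n(g_0,...,g_{n-1},x) (entries in 'a poly)
   with column i removed (0-based i) *)
definition Dmat :: "nat \<Rightarrow> nat \<Rightarrow> (nat \<Rightarrow> 'a::field) \<Rightarrow> nat \<Rightarrow> 'a poly mat" where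
  "Dmat q n g i = mat n n (\<lambda>(j, l).
     (let s = (if l < i then l else Suc l) in
      if s < n then [: g s ^ (q ^ j) :] else qmonom q j))"

(* \<Lambda>_{g,r}; the paper's index i (1-based) is i+1 here, so (-1)^{n-i} becomes (-1)^{n-1-i} *)
definition Lambda_gr :: "nat \<Rightarrow> nat \<Rightarrow> (nat \<Rightarrow> 'a::field) \<Rightarrow> (nat \<Rightarrow> 'a) \<Rightarrow> 'a poly" where
  "Lambda_gr q n g r =
     (\<Sum>i<n. smult ((-1) ^ (n - 1 - i) * r i / det (moore q n g)) (det (Dmat q n g i)))"

definition codeword :: "(nat \<Rightarrow> 'a::field) \<Rightarrow> 'a poly \<Rightarrow> nat \<Rightarrow> 'a" where
  "codeword g mm = (\<lambda>i. poly mm (g i))"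

definition gabidulin :: "nat \<Rightarrow> nat \<Rightarrow> (nat \<Rightarrow> 'a::field) \<Rightarrow> (nat \<Rightarrow> 'a) set" where
  "gabidulin q k g = {codeword g mm | mm. linearized q mm \<and> degree mm < q ^ k}"

(* Rank distance: F_q-rank of the m x n expansion matrix of a - b, i.e. the
   least number of elements of F_{q^m} whose F_q-span contains all coordinates
   a_i - b_i (the dimension of the F_q-column space of the expansion). *)
definition rank_dist :: "nat \<Rightarrow> nat \<Rightarrow> (nat \<Rightarrow> 'a::field) \<Rightarrow> (nat \<Rightarrow> 'a) \<Rightarrow> nat" where
  "rank_dist q n a b = (LEAST d. \<exists>v::nat \<Rightarrow> 'a. \<forall>i<n. a i - b i \<in> Fq_span q d v)"

(* elements of L_q(x,q^m)^2: pairs [f1 f2] *)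
type_synonym 'a lvec = "'a poly \<times> 'a poly"

definition lcomp :: "'a::field poly \<Rightarrow> 'a lvec \<Rightarrow> 'a lvec" where
  "lcomp h f = (pcompose h (fst f), pcompose h (snd f))"

definition ladd :: "'a::field lvec \<Rightarrow> 'a lvec \<Rightarrow> 'a lvec" where
  "ladd f h = (fst f + fst h, snd f + snd h)"

definition Mod_r :: "nat \<Rightarrow> nat \<Rightarrow> (nat \<Rightarrow> 'a::field) \<Rightarrow> (nat \<Rightarrow> 'a) \<Rightarrow> 'a lvec set" where
  "Mod_r q n g r = {ladd (lcomp \<beta> (Pi_g q n g, 0)) (lcomp \<gamma> (- Lambda_gr q n g r, [:0, 1:])) |
      \<beta> \<gamma>. linearized q \<beta> \<and> linearized q \<gamma>}"

(* (0,k-1)-weighted term-over-position order: leading position, leading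
   (unweighted) exponent i of lm = x^{[i]} e_j, leading coefficient *)
definition lpos :: "nat \<Rightarrow> nat \<Rightarrow> 'a::field lvec \<Rightarrow> nat" where
  "lpos q k f = (if snd f = 0 then 1 else if fst f = 0 then 2
      else if int (qdeg q (fst f)) > int (qdeg q (snd f)) + int k - 1 then 1 else 2)"

definition lcomp_at :: "nat \<Rightarrow> 'a lvec \<Rightarrow> 'a poly" where
  "lcomp_at j f = (if j = 1 then fst f else snd f)"

definition lexp :: "nat \<Rightarrow> nat \<Rightarrow> 'a::field lvec \<Rightarrow> nat" where
  "lexp q k f = qdeg q (lcomp_at (lpos q k f) f)"

definition lcoef :: "nat \<Rightarrow> nat \<Rightarrow> 'a::field lvec \<Rightarrow> 'a" where
  "lcoef q k f = lead_coeff (lcomp_at (lpos q k f) f)"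

definition wqdeg :: "nat \<Rightarrow> nat \<Rightarrow> 'a::field lvec \<Rightarrow> int" where
  "wqdeg q k f = (if fst f = 0 then int (qdeg q (snd f)) + int k - 1
      else if snd f = 0 then int (qdeg q (fst f))
      else max (int (qdeg q (fst f))) (int (qdeg q (snd f)) + int k - 1))"

(* one-step reduction of f modulo F:  lm f = x^{[a_h]} \<circ> lm h  and
   lt f = \<Sum>_h (b_h x^{[a_h]}) \<circ> lt h, where
   (b x^{[a]}) \<circ> (c x^{[i]} e_j) = b c^{q^a} x^{[a+i]} e_j *)
definition reduces1 :: "nat \<Rightarrow> nat \<Rightarrow> 'a::field lvec \<Rightarrow> 'a lvec set \<Rightarrow> bool" where
  "reduces1 q k f F \<longleftrightarrow> f \<noteq> (0, 0) \<and>
     (\<exists>S a b. finite S \<and> S \<subseteq> F \<and>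
        (\<forall>h\<in>S. h \<noteq> (0, 0) \<and> lpos q k h = lpos q k f \<and> lexp q k f = a h + lexp q k h) \<and>
        lcoef q k f = (\<Sum>h\<in>S. b h * lcoef q k h ^ (q ^ a h)))"

definition lcombo :: "('a lvec \<Rightarrow> 'a::field poly) \<Rightarrow> 'a lvec set \<Rightarrow> 'a lvec" where
  "lcombo c B = ((\<Sum>h\<in>B. pcompose (c h) (fst h)), (\<Sum>h\<in>B. pcompose (c h) (snd h)))"

definition is_basis :: "nat \<Rightarrow> 'a::field lvec set \<Rightarrow> 'a lvec set \<Rightarrow> bool" where
  "is_basis q M B \<longleftrightarrow> finite B \<and>
     M = {lcombo c B | c. \<forall>h\<in>B. linearized q (c h)} \<and>
     (\<forall>c. (\<forall>h\<in>B. linearized q (c h)) \<and> lcombo c B = (0, 0) \<longrightarrow> (\<forall>h\<in>B. c h = 0))"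

definition minimal_basis :: "nat \<Rightarrow> nat \<Rightarrow> 'a::field lvec set \<Rightarrow> 'a lvec set \<Rightarrow> bool" where
  "minimal_basis q k M B \<longleftrightarrow> is_basis q M B \<and> (\<forall>b\<in>B. \<not> reduces1 q k b (B - {b}))"

(* Algorithm 1, iteration j of the while-loop: the pairs (\<beta>,\<gamma>) tried ... *)
definition alg_cands :: "nat \<Rightarrow> int \<Rightarrow> int \<Rightarrow> nat \<Rightarrow> ('a::field poly \<times> 'a poly) set" where
  "alg_cands q l1 l2 j = {(\<beta>, \<gamma>). linearized q \<beta> \<and> qdeg_le q \<beta> (l2 - l1 + int j) \<and>
      linearized q \<gamma> \<and> \<gamma> \<noteq> 0 \<and> lead_coeff \<gamma> = 1 \<and> qdeg q \<gamma> = j}"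

(* ... and the list of message polynomials found in that iteration *)
definition alg_list :: "nat \<Rightarrow> 'a::field lvec \<Rightarrow> 'a lvec \<Rightarrow> int \<Rightarrow> int \<Rightarrow> nat \<Rightarrow> 'a poly set" where
  "alg_list q b1 b2 l1 l2 j = {mm. linearized q mm \<and>
      (\<exists>(\<beta>, \<gamma>) \<in> alg_cands q l1 l2 j.
         let f = ladd (lcomp \<beta> b1) (lcomp \<gamma> b2) in fst f = - pcompose (snd f) mm)}"

end

theory Submission
  imports Defs
begin

(* Let m be a closest message and t the rank of its error vector m(g i) - r i. The subspace
   polynomial E of the error space annihilates every error, so (- E \<circ> m, E) lies in M(r) and has
   weighted q-degree below t + k. On the other hand, every element (f1, f2) of M(r) with leading
   position 1 satisfies qdeg f1 \<ge> n - t \<ge> t + k: composing f1 + f2 \<circ> m with a subspace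
   polynomial of q-degree t makes it vanish on all g i. By the predictable leading term property,
   (- E \<circ> m, E) is therefore a multiple of b2 alone, which forces l2 < l1 and b2 = (- h2 \<circ> m, h2).
   So in the iteration j = 0 the only candidate is (\<beta>, \<gamma>) = (0, x), and the symbolic division
   for it returns m. *)

section \<open>Linearized polynomials\<close>

lemma linearized_0 [simp]: "linearized q 0"
  by (simp add: linearized_def)

lemma linearized_pX: "linearized q [:0, 1:]"
  unfolding linearized_def by (auto simp: coeff_pCons split: nat.splits intro: exI[of _ 0])

lemma linearized_add: "linearized q f \<Longrightarrow> linearized q g \<Longrightarrow> linearized q (f + g)"
  unfolding linearized_def by (metis add.right_neutral coeff_add)

lemma linearized_uminus: "linearized q f \<Longrightarrow> linearized q (- f)"
  unfolding linearized_def by simp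

lemma linearized_diff: "linearized q f \<Longrightarrow> linearized q g \<Longrightarrow> linearized q (f - g)"
  unfolding linearized_def by (metis coeff_diff diff_zero)

lemma linearized_smult: "linearized q f \<Longrightarrow> linearized q (smult c f)"
  unfolding linearized_def by simp

lemma linearized_monom: "linearized q (monom c (q ^ j))"
  unfolding linearized_def by auto

lemma linearized_sum:
  "(\<And>i. i \<in> A \<Longrightarrow> linearized q (h i)) \<Longrightarrow> linearized q (\<Sum>i\<in>A. h i)"
  by (induction A rule: infinite_finite_induct) (auto intro: linearized_add)

lemma linearized_coeff_0: "0 < q \<Longrightarrow> linearized q f \<Longrightarrow> coeff f 0 = 0"
  unfolding linearized_def by (metis less_numeral_extra(3) zero_less_power)

lemma qdeg_eqI: "1 < q \<Longrightarrow> degree f = q ^ d \<Longrightarrow> qdeg q f = d"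
  unfolding qdeg_def by (rule the_equality) auto

lemma qdeg_uminus: "qdeg q (- f) = qdeg q f"
  by (simp add: qdeg_def)

lemma linearized_degree:
  assumes "1 < q" "linearized q f" "f \<noteq> 0"
  shows "degree f = q ^ qdeg q f"
proof -
  have "coeff f (degree f) \<noteq> 0" using assms(3) by simp
  then obtain j where "degree f = q ^ j" using assms(2) unfolding linearized_def by blast
  thus ?thesis using qdeg_eqI[OF assms(1), of f j] by simp
qed

lemma linearized_degree_less_qpower:
  assumes "1 < q" "linearized q f" "f = 0 \<or> qdeg q f < d"
  shows "degree f < q ^ d"
  using assms linearized_degree[OF assms(1,2)] by (cases "f = 0") auto

lemma linearized_degree_pos: "1 < q \<Longrightarrow> linearized q f \<Longrightarrow> f \<noteq> 0 \<Longrightarrow> 0 < degree f"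
  using linearized_degree[of q f] by simp

lemma linearized_qdeg_add_dominant:
  assumes q: "1 < q" and f: "linearized q f" "f \<noteq> 0"
    and h: "linearized q h" "h = 0 \<or> qdeg q h < qdeg q f"
  shows "f + h \<noteq> 0 \<and> qdeg q (f + h) = qdeg q f"
proof -
  have "degree h < degree f"
    using linearized_degree_less_qpower[OF q h] linearized_degree[OF q f] by simp
  hence "coeff (f + h) (degree f) = lead_coeff f" and deg: "degree (f + h) = degree f"
    by (simp_all add: coeff_eq_0 degree_add_eq_left)
  hence "f + h \<noteq> 0" using f(2) by (metis coeff_0 leading_coeff_0_iff)
  moreover have "qdeg q (f + h) = qdeg q f"
    using deg linearized_degree[OF q f] by (intro qdeg_eqI[OF q]) simp
  ultimately show ?thesis ..
qed

lemma linearized_monic_qdeg_0: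
  assumes q: "1 < q" and "linearized q \<gamma>" "\<gamma> \<noteq> 0" "lead_coeff \<gamma> = 1" "qdeg q \<gamma> = 0"
  shows "\<gamma> = [:0, 1:]"
proof (rule poly_eqI)
  have deg: "degree \<gamma> = 1" using linearized_degree[OF q assms(2,3)] assms(5) by simp
  have "coeff \<gamma> 0 = 0" using linearized_coeff_0[OF _ assms(2)] q by simp
  thus "coeff \<gamma> i = coeff [:0, 1:] i" for i
    using assms(4) deg coeff_eq_0[of \<gamma> i]
    by (cases i) (auto simp: coeff_pCons split: nat.splits)
qed

lemma pcompose_pX_left: "[:0, 1:] \<circ>\<^sub>p p = p"
  for p :: "'a::comm_semiring_1 poly"
  by (simp add: pcompose_pCons)

lemma pcompose_monom: "monom c k \<circ>\<^sub>p p = smult c (p ^ k)"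
  for p :: "'a::comm_ring_1 poly"
  by (simp add: pcompose_altdef map_poly_monom poly_monom)

lemma frobenius_add:
  fixes x y :: "'a::comm_semiring_1"
  assumes "prime CHAR('a)" "q = CHAR('a) ^ e"
  shows "(x + y) ^ (q ^ j) = x ^ (q ^ j) + y ^ (q ^ j)"
  using freshmans_dream'[where m="q ^ j" and n="e * j" and x=x and y=y] assms by (simp add: power_mult)

lemma additive_poly_qpower_support:
  fixes P :: "'a::comm_ring_1 poly"
  assumes "prime CHAR('a)" "q = CHAR('a) ^ e" "\<forall>i. coeff P i \<noteq> 0 \<longrightarrow> (\<exists>j. i = q ^ j)"
  shows "additive (poly P)"
proof
  fix x y :: 'a
  have *: "coeff P i * (x + y) ^ i = coeff P i * x ^ i + coeff P i * y ^ i" for i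
    using assms(3) frobenius_add[OF assms(1,2)] by (cases "coeff P i = 0") (auto simp: distrib_left)
  show "poly P (x + y) = poly P x + poly P y"
    unfolding poly_altdef by (simp only: * sum.distrib)
qed

section \<open>Linearity over \<open>\<bbbF>\<^sub>q\<close>\<close>

locale Fq_field =
  fixes q e :: nat and ty :: "'a::field itself"
  assumes prime_char: "prime CHAR('a)" and q_def: "q = CHAR('a) ^ e" and e_pos: "0 < e"
begin

lemma q_gt_1: "1 < q"
proof -
  have "CHAR('a) ^ 1 \<le> CHAR('a) ^ e"
    using prime_char e_pos prime_gt_0_nat by (intro power_increasing) (simp_all add: Suc_le_eq)
  moreover have "1 < CHAR('a)" using prime_char prime_gt_1_nat by blast
  ultimately show ?thesis unfolding q_def by simp
qed

lemma additive_poly_linearized: "linearized q (f::'a poly) \<Longrightarrow> additive (poly f)"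
  by (rule additive_poly_qpower_support[OF prime_char q_def]) (auto simp: linearized_def)

lemma additive_pcompose_linearized:
  assumes "linearized q (f::'a poly)"
  shows "additive (pcompose f)"
proof -
  have "pcompose f = poly (map_poly (\<lambda>c. [:c:]) f)"
    by (rule ext) (simp add: pcompose_altdef)
  moreover have "additive (poly (map_poly (\<lambda>c. [:c:]) f))"
  proof (rule additive_poly_qpower_support)
    show "prime CHAR('a poly)" using prime_char by simp
    show "q = CHAR('a poly) ^ e" using q_def by simp
    show "\<forall>i. coeff (map_poly (\<lambda>c. [:c:]) f) i \<noteq> 0 \<longrightarrow> (\<exists>j. i = q ^ j)"
      using assms by (simp add: linearized_def coeff_map_poly)
  qed
  ultimately show ?thesis by simp
qed

lemma pcompose_linearized_0: "linearized q (c::'a poly) \<Longrightarrow> c \<circ>\<^sub>p 0 = 0"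
  using additive.zero[OF additive_pcompose_linearized] .

lemma Fq_qpower: "(c::'a) \<in> Fq q \<Longrightarrow> c ^ (q ^ j) = c"
  unfolding Fq_def by (induction j) (auto simp: power_mult)

lemma Fq_0: "(0::'a) \<in> Fq q" and Fq_1: "(1::'a) \<in> Fq q"
  using q_gt_1 by (auto simp: Fq_def)

lemma Fq_diff:
  assumes "(x::'a) \<in> Fq q" "y \<in> Fq q"
  shows "x - y \<in> Fq q"
proof -
  have "additive (\<lambda>x::'a. x ^ q)"
    using frobenius_add[OF prime_char q_def, of _ _ 1] by unfold_locales simp
  thus ?thesis using additive.diff[of "\<lambda>x. x ^ q" x y] assms by (simp add: Fq_def)
qed

lemma poly_linearized_Fq_mult:
  assumes f: "linearized q (f::'a poly)" and c: "c \<in> Fq q"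
  shows "poly f (c * x) = c * poly f x"
proof -
  have *: "coeff f i * (c * x) ^ i = c * (coeff f i * x ^ i)" for i
    using f Fq_qpower[OF c] unfolding linearized_def
    by (cases "coeff f i = 0") (auto simp: power_mult_distrib ac_simps)
  show ?thesis by (simp only: poly_altdef sum_distrib_left *)
qed

lemma linearized_power_q:
  assumes "linearized q (f::'a poly)"
  shows "linearized q (f ^ q)"
proof -
  have "f ^ q = (\<Sum>i\<le>degree f. monom (coeff f i) i) ^ q"
    by (simp add: poly_as_sum_of_monoms)
  also have "\<dots> = (\<Sum>i\<le>degree f. monom (coeff f i) i ^ q)"
    using freshmans_dream_sum'[where m=q and n=e and f="\<lambda>i. monom (coeff f i) i" and A="{..degree f}"]
      prime_char by (simp add: q_def)
  also have "\<dots> = (\<Sum>i\<le>degree f. monom (coeff f i ^ q) (i * q))"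
    by (simp add: monom_power)
  finally have eq: "f ^ q = \<dots>" .
  have *: "linearized q (monom (coeff f i ^ q) (i * q))" for i
  proof (cases "coeff f i = 0")
    case True thus ?thesis using q_gt_1 by (simp add: zero_power)
  next
    case False
    then obtain j where j: "i * q = q ^ Suc j" using assms unfolding linearized_def by auto
    show ?thesis unfolding j by (rule linearized_monom)
  qed
  show ?thesis unfolding eq by (rule linearized_sum) (rule *)
qed

lemma linearized_power_qpower: "linearized q (f::'a poly) \<Longrightarrow> linearized q (f ^ (q ^ s))"
proof (induction s)
  case (Suc s)
  have "f ^ (q ^ Suc s) = (f ^ (q ^ s)) ^ q" by (simp only: power_Suc2 power_mult)
  thus ?case using linearized_power_q Suc by simp
qed simp

lemma linearized_pcompose:
  assumes f: "linearized q (f::'a poly)" and g: "linearized q g"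
  shows "linearized q (f \<circ>\<^sub>p g)"
proof -
  have eq: "f \<circ>\<^sub>p g = (\<Sum>i\<le>degree f. smult (coeff f i) (g ^ i))"
    unfolding pcompose_altdef poly_altdef by (simp add: coeff_map_poly degree_map_poly)
  have *: "linearized q (smult (coeff f i) (g ^ i))" for i
    using f linearized_smult linearized_power_qpower[OF g] unfolding linearized_def
    by (cases "coeff f i = 0") auto
  show ?thesis unfolding eq by (rule linearized_sum) (rule *)
qed

lemma pcompose_linearized_nonzero:
  "linearized q (f::'a poly) \<Longrightarrow> linearized q g \<Longrightarrow> f \<noteq> 0 \<Longrightarrow> g \<noteq> 0 \<Longrightarrow> f \<circ>\<^sub>p g \<noteq> 0"
  using pcompose_eq_0 linearized_degree_pos[OF q_gt_1] by blast

lemma qdeg_pcompose: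
  "linearized q (f::'a poly) \<Longrightarrow> linearized q g \<Longrightarrow> f \<noteq> 0 \<Longrightarrow> g \<noteq> 0 \<Longrightarrow>
   qdeg q (f \<circ>\<^sub>p g) = qdeg q f + qdeg q g"
  using q_gt_1 by (intro qdeg_eqI) (simp_all add: degree_pcompose linearized_degree power_add)

lemma Fq_span_SucE:
  assumes "(x::'a) \<in> Fq_span q (Suc j) v"
  obtains y l where "y \<in> Fq_span q j v" "l \<in> Fq q" "x = y + l * v j"
proof -
  obtain c where c: "\<forall>i<Suc j. c i \<in> Fq q" "x = (\<Sum>i<Suc j. c i * v i)"
    using assms unfolding Fq_span_def by blast
  have "(\<Sum>i<j. c i * v i) \<in> Fq_span q j v" unfolding Fq_span_def using c(1) by auto
  thus ?thesis using c by (intro that[of "\<Sum>i<j. c i * v i" "c j"]) auto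
qed

lemma Fq_span_generator:
  assumes "i < n"
  shows "(v i::'a) \<in> Fq_span q n v"
proof -
  have "(\<Sum>l<n. (if l = i then 1 else 0) * v l) = (\<Sum>l<n. if l = i then v l else 0)"
    by (rule sum.cong) auto
  also have "\<dots> = v i" using assms by simp
  finally have "(\<Sum>l<n. (if l = i then 1 else 0) * v l) = v i" .
  moreover have "\<forall>l<n. (if l = i then 1 else 0 :: 'a) \<in> Fq q" using Fq_0 Fq_1 by simp
  ultimately show ?thesis
    unfolding Fq_span_def mem_Collect_eq by (intro exI[of _ "\<lambda>l. if l = i then 1 else 0"]) simp
qed

lemma poly_linearized_Fq_span:
  assumes f: "linearized q f" and x: "(x::'a) \<in> Fq_span q d v"
  shows "poly f x \<in> Fq_span q d (\<lambda>i. poly f (v i))"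
proof -
  obtain c where c: "\<forall>i<d. c i \<in> Fq q" "x = (\<Sum>i<d. c i * v i)"
    using x unfolding Fq_span_def by blast
  have "poly f x = (\<Sum>i<d. c i * poly f (v i))"
    unfolding c(2) additive.sum[OF additive_poly_linearized[OF f]]
    using poly_linearized_Fq_mult[OF f] c(1) by simp
  thus ?thesis unfolding Fq_span_def using c(1) by blast
qed

lemma poly_linearized_vanishes_on_Fq_span:
  assumes "linearized q f" "\<forall>i<d. poly f (v i) = 0" "(x::'a) \<in> Fq_span q d v"
  shows "poly f x = 0"
  using poly_linearized_Fq_span[OF assms(1,3)] assms(2) unfolding Fq_span_def by auto

end

section \<open>Subspace polynomials\<close>

(* The subspace polynomial of v 0, ..., v (j - 1); the recursion is
   P (j + 1) x = (\<Prod>c \<in> F_q. P j (x - c * v j)) = P j x ^ q - P j (v j) ^ (q - 1) * P j x. *)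

primrec subspace_poly :: "nat \<Rightarrow> (nat \<Rightarrow> 'a::field) \<Rightarrow> nat \<Rightarrow> 'a poly" where
  "subspace_poly q v 0 = [:0, 1:]"
| "subspace_poly q v (Suc j) = subspace_poly q v j ^ q
     - smult (poly (subspace_poly q v j) (v j) ^ (q - 1)) (subspace_poly q v j)"

context Fq_field
begin

lemma subspace_poly_linearized_monic:
  "linearized q (subspace_poly q v j :: 'a poly) \<and> degree (subspace_poly q v j) = q ^ j
   \<and> lead_coeff (subspace_poly q v j) = 1"
proof (induction j)
  case 0 thus ?case using linearized_pX by simp
next
  case (Suc j)
  define P where "P = subspace_poly q v j"
  define S where "S = smult (poly P (v j) ^ (q - 1)) P"
  have P: "linearized q P" "degree P = q ^ j" "lead_coeff P = 1" "P \<noteq> 0"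
    using Suc by (auto simp: P_def)
  have deg_Pq: "degree (P ^ q) = q ^ Suc j"
    using P by (simp add: degree_power_eq mult.commute)
  have "degree S \<le> q ^ j" unfolding S_def using P by simp
  also have "\<dots> < q ^ Suc j" using q_gt_1 by simp
  finally have deg_S: "degree S < degree (P ^ q)" using deg_Pq by simp
  have deg: "degree (P ^ q - S) = q ^ Suc j"
    using degree_add_eq_left[of "- S" "P ^ q"] deg_S deg_Pq by simp
  have "coeff (P ^ q) (q ^ Suc j) = 1" using lead_coeff_power[of P q] P(3) deg_Pq by simp
  hence "lead_coeff (P ^ q - S) = 1" unfolding deg using deg_S deg_Pq by (simp add: coeff_eq_0)
  moreover have "linearized q (P ^ q - S)"
    unfolding S_def using P by (intro linearized_diff linearized_power_q linearized_smult)
  ultimately show ?case using deg by (simp add: P_def S_def)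
qed

lemma linearized_subspace_poly: "linearized q (subspace_poly q v j :: 'a poly)"
  and degree_subspace_poly: "degree (subspace_poly q v j :: 'a poly) = q ^ j"
  and lead_coeff_subspace_poly: "lead_coeff (subspace_poly q v j :: 'a poly) = 1"
  using subspace_poly_linearized_monic by blast+

lemma subspace_poly_nonzero: "(subspace_poly q v j :: 'a poly) \<noteq> 0"
  using lead_coeff_subspace_poly by (metis leading_coeff_0_iff zero_neq_one)

lemma qdeg_subspace_poly: "qdeg q (subspace_poly q v j :: 'a poly) = j"
  by (rule qdeg_eqI[OF q_gt_1 degree_subspace_poly])

lemma poly_subspace_poly_Fq_span: "(x::'a) \<in> Fq_span q j v \<Longrightarrow> poly (subspace_poly q v j) x = 0"
proof (induction j arbitrary: x)
  case 0 thus ?case unfolding Fq_span_def by simp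
next
  case (Suc j)
  obtain y l where yl: "y \<in> Fq_span q j v" "l \<in> Fq q" "x = y + l * v j"
    using Suc.prems by (rule Fq_span_SucE)
  define P where "P = subspace_poly q v j"
  define c where "c = poly P (v j)"
  have P: "linearized q P" unfolding P_def by (rule linearized_subspace_poly)
  have "poly P x = l * c"
    unfolding yl(3) c_def additive.add[OF additive_poly_linearized[OF P]]
    using poly_linearized_Fq_mult[OF P yl(2)] Suc.IH[OF yl(1)] by (simp add: P_def)
  moreover have "l ^ q = l" using yl(2) by (simp add: Fq_def)
  moreover have "c ^ (q - 1) * c = c ^ q"
    using q_gt_1 power_Suc2[of c "q - 1"] by simp
  ultimately have "poly P x ^ q - c ^ (q - 1) * poly P x = 0"
    by (simp add: power_mult_distrib mult.left_commute)
  thus ?case by (simp add: P_def c_def)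
qed

end

section \<open>Counting points of \<open>\<bbbF>\<^sub>q\<close>-subspaces\<close>

lemma power_card_UNIV_eq_self: "(x::'a::{finite,field}) ^ card (UNIV :: 'a set) = x"
proof (cases "x = 0")
  case False
  have "x * (\<Prod>y\<in>UNIV-{0}. x * y) = x * x ^ (card (UNIV :: 'a set) - 1) * \<Prod>(UNIV-{0})"
    by (simp add: prod.distrib mult_ac)
  also have "x * x ^ (card (UNIV :: 'a set) - 1) = x ^ card (UNIV :: 'a set)"
    using finite_UNIV_card_ge_0[where ?'a = 'a] by (simp flip: power_Suc)
  also have "(\<Prod>y\<in>UNIV-{0}. x * y) = (\<Prod>y\<in>UNIV-{0}. y)"
    by (rule prod.reindex_bij_witness[of _ "\<lambda>y. y / x" "\<lambda>y. x * y"]) (use False in auto)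
  finally show ?thesis by simp
qed (use finite_UNIV_card_ge_0[where ?'a = 'a] in auto)

lemma card_le_degree_if_roots:
  fixes p :: "'a::idom poly"
  assumes "p \<noteq> 0" "\<forall>x\<in>S. poly p x = 0"
  shows "card S \<le> degree p"
proof -
  have "card S \<le> card {x. poly p x = 0}"
    using assms poly_roots_finite[OF assms(1)] by (intro card_mono) auto
  also have "\<dots> \<le> degree p" by (rule card_poly_roots_bound[OF assms(1)])
  finally show ?thesis .
qed

lemma monic_poly_eqI_common_roots:
  fixes p r :: "'a::idom poly"
  assumes "card S = degree p" "degree r = degree p" "lead_coeff p = 1" "lead_coeff r = 1"
    and "\<forall>x\<in>S. poly p x = 0" "\<forall>x\<in>S. poly r x = 0"
  shows "p = r"
proof (rule ccontr)
  assume "p \<noteq> r"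
  hence nz: "p - r \<noteq> 0" by simp
  have "degree (p - r) \<le> degree p" using assms(2) by (simp add: degree_diff_le)
  moreover have "coeff (p - r) (degree p) = 0" using assms(2-4) by simp
  ultimately have "degree (p - r) < degree p" using nz by (metis le_neq_implies_less leading_coeff_0_iff)
  moreover have "card S \<le> degree (p - r)" using card_le_degree_if_roots[OF nz] assms(5,6) by simp
  ultimately show False using assms(1) by simp
qed

lemma degree_pX_power_minus_pX: "1 < k \<Longrightarrow> degree ([:0, 1:] ^ k - [:0, 1:] :: 'a::field poly) = k"
  by (subst diff_conv_add_uminus, subst degree_add_eq_left) (simp_all add: degree_power_eq)

lemma Suc_mult_geometric_sum: "Suc (r * (\<Sum>i<m. Suc r ^ i)) = Suc r ^ m"
  by (induction m) (simp_all add: algebra_simps)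

locale Fqm_field = Fq_field q e ty for q e and ty :: "'a::{finite,field} itself" +
  fixes m :: nat
  assumes card_UNIV: "card (UNIV :: 'a set) = q ^ m" and m_pos: "1 \<le> m"
begin

(* Every element is a root of X ^ q ^ m - X = (X ^ q - X) * H, and H has only q ^ m - q roots. *)

lemma card_Fq: "q \<le> card (Fq q :: 'a set)"
proof -
  define X :: "'a poly" where "X = [:0, 1:]"
  define s where "s = (\<Sum>i<m. q ^ i)"
  define H where "H = (\<Sum>i<s. (X ^ (q - 1)) ^ i)"
  have N: "q ^ m = Suc ((q - 1) * s)"
    using Suc_mult_geometric_sum[of "q - 1" m] q_gt_1 by (simp add: s_def)
  have Xq: "X * X ^ (q - 1) = X ^ q" using q_gt_1 by (simp flip: power_Suc)
  have "X ^ (q ^ m) - X = X * ((X ^ (q - 1)) ^ s - 1)"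
    by (simp add: N power_mult right_diff_distrib)
  also have "\<dots> = X * (X ^ (q - 1) - 1) * H"
    unfolding H_def power_diff_1_eq by (simp only: mult.assoc)
  also have "\<dots> = (X ^ q - X) * H"
    using Xq by (simp add: right_diff_distrib)
  finally have factor: "X ^ (q ^ m) - X = (X ^ q - X) * H" .
  have qm: "q \<le> q ^ m" using m_pos q_gt_1 power_increasing[of 1 m q] by simp
  have deg_qm: "degree (X ^ (q ^ m) - X) = q ^ m" and deg_q: "degree (X ^ q - X) = q"
    unfolding X_def using q_gt_1 qm by (simp_all add: degree_pX_power_minus_pX)
  hence nz: "X ^ q - X \<noteq> 0" "H \<noteq> 0" using factor q_gt_1 qm by auto
  hence deg_H: "degree H = q ^ m - q" using factor deg_qm deg_q by (simp add: degree_mult_eq)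
  have "poly (X ^ q - X) x = 0 \<or> poly H x = 0" for x
    using power_card_UNIV_eq_self[of x] card_UNIV factor[THEN arg_cong, of "\<lambda>p. poly p x"]
    by (simp add: X_def)
  moreover have "poly (X ^ q - X) x = 0 \<longleftrightarrow> x \<in> Fq q" for x
    by (simp add: X_def Fq_def)
  ultimately have "UNIV \<subseteq> Fq q \<union> {x. poly H x = 0}" by blast
  hence "card (UNIV :: 'a set) \<le> card (Fq q \<union> {x. poly H x = 0})" by (intro card_mono) auto
  also have "\<dots> \<le> card (Fq q :: 'a set) + card {x. poly H x = 0}" by (rule card_Un_le)
  also have "\<dots> \<le> card (Fq q :: 'a set) + (q ^ m - q)"
    using card_poly_roots_bound[OF nz(2)] deg_H by simp
  finally show ?thesis using card_UNIV qm by linarith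
qed

lemma card_Fq_span_ge:
  assumes ind: "Fq_lin_indep q n g"
  shows "q ^ n \<le> card (Fq_span q n (g::nat \<Rightarrow> 'a))"
proof -
  define F where "F = (\<lambda>c. \<Sum>i<n. c i * g i)"
  define C where "C = PiE {..<n} (\<lambda>_. Fq q :: 'a set)"
  have inj: "inj_on F C"
  proof
    fix c d assume c: "c \<in> C" and d: "d \<in> C" and "F c = F d"
    hence "(\<Sum>i<n. (c i - d i) * g i) = 0" by (simp add: F_def left_diff_distrib sum_subtractf)
    moreover have "\<forall>i<n. c i - d i \<in> Fq q" using c d unfolding C_def by (auto intro: Fq_diff)
    ultimately have "\<forall>i<n. c i - d i = 0"
      using ind unfolding Fq_lin_indep_def by (auto dest: spec[of _ "\<lambda>i. c i - d i"])
    thus "c = d" using c d unfolding C_def by (intro PiE_ext) auto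
  qed
  have "q ^ n \<le> card C"
    unfolding C_def using card_Fq by (simp add: card_PiE power_mono)
  also have "\<dots> = card (F ` C)" using inj by (simp add: card_image)
  also have "\<dots> \<le> card (Fq_span q n g)"
    unfolding F_def C_def Fq_span_def by (intro card_mono) (auto simp: PiE_def Pi_def)
  finally show ?thesis .
qed

lemma card_Fq_span:
  assumes "Fq_lin_indep q n g"
  shows "card (Fq_span q n (g::nat \<Rightarrow> 'a)) = q ^ n"
proof -
  have "card (Fq_span q n g) \<le> degree (subspace_poly q g n)"
    using poly_subspace_poly_Fq_span by (intro card_le_degree_if_roots subspace_poly_nonzero) blast
  hence "card (Fq_span q n g) \<le> q ^ n" by (simp add: degree_subspace_poly)
  thus ?thesis using card_Fq_span_ge[OF assms] by simp
qed

lemma Pi_g_eq_subspace_poly: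
  assumes "Fq_lin_indep q n (g::nat \<Rightarrow> 'a)"
  shows "Pi_g q n g = subspace_poly q g n"
  unfolding Pi_g_def
proof (rule monic_poly_eqI_common_roots)
  show "card (Fq_span q n g) = degree (\<Prod>u\<in>Fq_span q n g. [:- u, 1:])"
    by (simp add: degree_prod_sum_eq)
  thus "degree (subspace_poly q g n) = degree (\<Prod>u\<in>Fq_span q n g. [:- u, 1:])"
    by (simp add: card_Fq_span[OF assms] degree_subspace_poly)
  show "\<forall>x\<in>Fq_span q n g. poly (\<Prod>u\<in>Fq_span q n g. [:- u, 1:]) x = 0"
    by (auto simp: poly_prod)
  show "\<forall>x\<in>Fq_span q n g. poly (subspace_poly q g n) x = 0"
    by (simp add: poly_subspace_poly_Fq_span)
qed (simp_all add: lead_coeff_prod lead_coeff_subspace_poly)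

lemma le_qdeg_if_vanishes_on_Fq_span:
  assumes ind: "Fq_lin_indep q n g" and f: "linearized q f" "(f::'a poly) \<noteq> 0"
    and vanish: "\<forall>x\<in>Fq_span q n g. poly f x = 0"
  shows "n \<le> qdeg q f"
proof -
  have "q ^ n \<le> degree f"
    using card_le_degree_if_roots[OF f(2) vanish] card_Fq_span[OF ind] by simp
  thus ?thesis
    unfolding linearized_degree[OF q_gt_1 f] by (rule power_le_imp_le_exp[OF q_gt_1])
qed

lemma subspace_poly_cancel_leading_term:
  assumes ind: "Fq_lin_indep q n (g::nat \<Rightarrow> 'a)"
    and h: "linearized q h" "h \<noteq> 0" and vanish: "\<forall>x\<in>Fq_span q n g. poly h x = 0"
  obtains T where "linearized q T"
    "h - T \<circ>\<^sub>p subspace_poly q g n = 0 \<or> degree (h - T \<circ>\<^sub>p subspace_poly q g n) < degree h"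
proof -
  define P where "P = subspace_poly q g n"
  define d where "d = qdeg q h"
  have deg_h: "degree h = q ^ d" unfolding d_def by (rule linearized_degree[OF q_gt_1 h])
  have "n \<le> d" unfolding d_def by (rule le_qdeg_if_vanishes_on_Fq_span[OF ind h vanish])
  define T where "T = monom (lead_coeff h) (q ^ (d - n))"
  have deg_P: "degree (P ^ (q ^ (d - n))) = q ^ d"
    using \<open>n \<le> d\<close> by (simp add: P_def degree_power_eq subspace_poly_nonzero degree_subspace_poly
        flip: power_add power_mult)
  have "lead_coeff (P ^ (q ^ (d - n))) = 1"
    by (simp add: P_def lead_coeff_power lead_coeff_subspace_poly)
  hence "coeff (P ^ (q ^ (d - n))) (q ^ d) = 1" using deg_P by simp
  hence "coeff (h - T \<circ>\<^sub>p P) (q ^ d) = 0" unfolding T_def pcompose_monom using deg_h by simp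
  moreover have "degree (h - T \<circ>\<^sub>p P) \<le> q ^ d"
    unfolding T_def pcompose_monom using deg_h deg_P
    by (intro degree_diff_le) (simp_all add: degree_smult_le)
  ultimately have "h - T \<circ>\<^sub>p P = 0 \<or> degree (h - T \<circ>\<^sub>p P) < degree h"
    using deg_h by (metis le_neq_implies_less leading_coeff_0_iff)
  moreover have "linearized q T" unfolding T_def by (rule linearized_monom)
  ultimately show ?thesis using that unfolding P_def by blast
qed

lemma subspace_poly_right_dvd:
  assumes ind: "Fq_lin_indep q n (g::nat \<Rightarrow> 'a)"
  shows "linearized q h \<Longrightarrow> (\<forall>x\<in>Fq_span q n g. poly h x = 0) \<Longrightarrow>
    \<exists>\<beta>. linearized q \<beta> \<and> h = \<beta> \<circ>\<^sub>p subspace_poly q g n"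
proof (induction "degree h" arbitrary: h rule: less_induct)
  case less
  define P where "P = subspace_poly q g n"
  show ?case
  proof (cases "h = 0")
    case True thus ?thesis by (intro exI[of _ 0]) simp
  next
    case False
    then obtain T where T: "linearized q T" and smaller: "h - T \<circ>\<^sub>p P = 0 \<or> degree (h - T \<circ>\<^sub>p P) < degree h"
      using subspace_poly_cancel_leading_term[OF ind less.prems(1) _ less.prems(2)] unfolding P_def by blast
    have "linearized q (h - T \<circ>\<^sub>p P)"
      unfolding P_def using less.prems(1) T
      by (intro linearized_diff linearized_pcompose linearized_subspace_poly)
    moreover have "\<forall>x\<in>Fq_span q n g. poly (h - T \<circ>\<^sub>p P) x = 0"
      using less.prems(2) poly_subspace_poly_Fq_span linearized_coeff_0[OF _ T] q_gt_1
      by (simp add: P_def poly_pcompose poly_0_coeff_0)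
    ultimately have "\<exists>\<beta>. linearized q \<beta> \<and> h - T \<circ>\<^sub>p P = \<beta> \<circ>\<^sub>p P"
      using smaller less.hyps[of "h - T \<circ>\<^sub>p P"]
      by (cases "h - T \<circ>\<^sub>p P = 0") (auto simp: P_def intro: exI[of _ 0])
    then obtain \<beta> where "linearized q \<beta>" "h - T \<circ>\<^sub>p P = \<beta> \<circ>\<^sub>p P" by blast
    hence "linearized q (\<beta> + T) \<and> h = (\<beta> + T) \<circ>\<^sub>p P"
      using T by (simp add: pcompose_add linearized_add algebra_simps)
    thus ?thesis unfolding P_def by blast
  qed
qed

end

section \<open>The Moore matrix and the interpolating polynomial \<open>\<Lambda>\<close>\<close>

definition moore_cols :: "nat \<Rightarrow> nat \<Rightarrow> (nat \<Rightarrow> 'a::field) \<Rightarrow> (nat \<Rightarrow> nat) \<Rightarrow> 'a mat" where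
  "moore_cols q n g \<sigma> = mat n n (\<lambda>(j, l). g (\<sigma> l) ^ (q ^ j))"

definition move_to_last :: "nat \<Rightarrow> nat \<Rightarrow> nat \<Rightarrow> nat" where
  "move_to_last n i l = (if l < i then l else if l < n - 1 then Suc l else i)"

lemma det_moore_cols_move_to_last:
  "i < n \<Longrightarrow> det (moore_cols q n g (move_to_last n i)) = (-1) ^ (n - 1 - i) * det (moore q n g)"
proof (induction "n - 1 - i" arbitrary: i)
  case 0
  hence "move_to_last n i l = l" if "l < n" for l using that by (auto simp: move_to_last_def)
  hence "moore_cols q n g (move_to_last n i) = moore q n g"
    by (intro eq_matI) (simp_all add: moore_cols_def moore_def)
  thus ?case using "0.hyps" by simp
next
  case (Suc k)
  hence i: "i < n - 1" by simp
  have swap: "moore_cols q n g (move_to_last n i)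
      = swapcols i (n - 1) (moore_cols q n g (move_to_last n (Suc i)))"
    using i by (intro eq_matI) (auto simp: moore_cols_def move_to_last_def mat_swapcols_def)
  have "det (moore_cols q n g (move_to_last n i)) = - det (moore_cols q n g (move_to_last n (Suc i)))"
    unfolding swap using i by (intro det_swapcols[of i n "n - 1"]) (auto simp: moore_cols_def)
  thus ?case using Suc.hyps(1)[of "Suc i"] Suc.hyps(2) i by (simp add: Suc_diff_Suc[symmetric])
qed

definition Dmat_eval :: "nat \<Rightarrow> nat \<Rightarrow> (nat \<Rightarrow> 'a::field) \<Rightarrow> nat \<Rightarrow> 'a \<Rightarrow> 'a mat" where
  "Dmat_eval q n g i a = mat n n (\<lambda>(j, l). (let s = (if l < i then l else Suc l) in
      if s < n then g s ^ (q ^ j) else a ^ (q ^ j)))"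

lemma poly_det_Dmat: "poly (det (Dmat q n g i)) a = det (Dmat_eval q n g i a)"
proof -
  interpret eval: comm_ring_hom "\<lambda>p. poly p a"
    by unfold_locales auto
  have "map_mat (\<lambda>p. poly p a) (Dmat q n g i) = Dmat_eval q n g i a"
    by (intro eq_matI) (auto simp: Dmat_def Dmat_eval_def qmonom_def poly_monom Let_def)
  thus ?thesis using eval.hom_det[of "Dmat q n g i"] by simp
qed

lemma poly_det_Dmat_generator:
  assumes "i < n" "l < n"
  shows "poly (det (Dmat q n g i)) (g l) = (if l = i then (-1) ^ (n - 1 - i) * det (moore q n g) else 0)"
proof (cases "l = i")
  case True
  have "Dmat_eval q n g i (g i) = moore_cols q n g (move_to_last n i)"
    using assms by (intro eq_matI) (auto simp: Dmat_eval_def moore_cols_def move_to_last_def Let_def)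
  thus ?thesis using True assms by (simp add: poly_det_Dmat det_moore_cols_move_to_last)
next
  case False
  (* Column l (shifted down by one if i < l) reappears as the last column. *)
  define l' where "l' = (if l < i then l else l - 1)"
  have "det (Dmat_eval q n g i (g l)) = 0"
  proof (rule det_identical_columns)
    show "Dmat_eval q n g i (g l) \<in> carrier_mat n n" by (simp add: Dmat_eval_def)
    show "l' \<noteq> n - 1" "l' < n" "n - 1 < n" using assms False by (auto simp: l'_def)
    show "col (Dmat_eval q n g i (g l)) l' = col (Dmat_eval q n g i (g l)) (n - 1)"
      using assms False by (intro eq_vecI) (auto simp: Dmat_eval_def Let_def l'_def)
  qed
  thus ?thesis using False by (simp add: poly_det_Dmat)
qed

lemma linearized_det_Dmat:
  assumes "i < n"
  shows "linearized q (det (Dmat q n g i))"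
proof -
  define D where "D = Dmat q n g i"
  have D: "D \<in> carrier_mat n n" by (simp add: D_def Dmat_def)
  (* Expanding along the last column, whose entries are x^[j], all cofactors are constants. *)
  have cof: "degree (cofactor D j (n - 1)) = 0" if "j < n" for j
  proof -
    have "degree (det (mat_delete D j (n - 1))) \<le> 0 * (n - 1)"
      using assms by (intro degree_det_le mat_delete_carrier[OF D])
        (auto simp: D_def mat_delete_def Dmat_def Let_def)
    moreover have "degree ((-1) ^ (j + (n - 1)) :: 'a poly) = 0"
      using degree_power_le[of "-1::'a poly" "j + (n - 1)"] by simp
    ultimately show ?thesis
      using degree_mult_le[of "(-1) ^ (j + (n - 1))" "det (mat_delete D j (n - 1))"]
      by (simp add: cofactor_def)
  qed
  have "det D = (\<Sum>j<n. D $$ (j, n - 1) * cofactor D j (n - 1))"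
    using assms by (intro laplace_expansion_column[OF D]) simp
  also have "\<dots> = (\<Sum>j<n. monom (coeff (cofactor D j (n - 1)) 0) (q ^ j))"
  proof (intro sum.cong refl)
    fix j assume j: "j \<in> {..<n}"
    moreover have "\<not> n - 1 < i" using assms by simp
    ultimately have "D $$ (j, n - 1) = monom 1 (q ^ j)"
      using assms by (simp add: D_def Dmat_def qmonom_def Let_def)
    thus "D $$ (j, n - 1) * cofactor D j (n - 1) = monom (coeff (cofactor D j (n - 1)) 0) (q ^ j)"
      using cof[of j] j
      by (metis degree_0_id lessThan_iff mult.commute mult_monom add_0 monom_0 mult.left_neutral)
  qed
  finally show ?thesis unfolding D_def by (simp add: linearized_sum linearized_monom)
qed

lemma linearized_Lambda_gr: "linearized q (Lambda_gr q n g r)"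
  unfolding Lambda_gr_def by (intro linearized_sum linearized_smult linearized_det_Dmat) simp

context Fqm_field
begin

lemma det_moore_nonzero:
  assumes ind: "Fq_lin_indep q n (g :: nat \<Rightarrow> 'a)"
  shows "det (moore q n g) \<noteq> 0"
proof
  assume "det (moore q n g) = 0"
  (* A kernel vector v of the transpose yields V = \<Sum>j<n. v j x^[j], which vanishes on all g l
     although its degree is below q ^ n. *)
  define M where "M = moore q n g"
  have M: "M \<in> carrier_mat n n" by (simp add: M_def moore_def)
  have "det (transpose_mat M) = 0" using \<open>det (moore q n g) = 0\<close> det_transpose[OF M] by (simp add: M_def)
  then obtain v where v: "v \<in> carrier_vec n" "v \<noteq> 0\<^sub>v n" "transpose_mat M *\<^sub>v v = 0\<^sub>v n"
    using det_0_iff_vec_prod_zero_field[of "transpose_mat M" n] M by auto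
  define V where "V = (\<Sum>j<n. monom (v $ j) (q ^ j))"
  have V: "linearized q V" unfolding V_def by (intro linearized_sum linearized_monom)
  have "poly V (g l) = 0" if "l < n" for l
  proof -
    have "(transpose_mat M *\<^sub>v v) $ l = (\<Sum>j<n. v $ j * g l ^ (q ^ j))"
      using that v(1) M by (simp add: scalar_prod_def M_def moore_def lessThan_atLeast0 mult.commute)
    thus ?thesis using v(3) that by (simp add: V_def poly_sum poly_monom)
  qed
  hence vanish: "\<forall>x\<in>Fq_span q n g. poly V x = 0"
    using poly_linearized_vanishes_on_Fq_span[OF V] by blast
  have coeff_V: "coeff V k = (\<Sum>j<n. if q ^ j = k then v $ j else 0)" for k
    unfolding V_def by (simp add: coeff_sum)
  obtain j where j: "j < n" "v $ j \<noteq> 0"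
    using v(1,2) by (metis eq_vecI index_zero_vec(1,2) carrier_vecD)
  have "coeff V (q ^ j) = v $ j"
    unfolding coeff_V using j(1) q_gt_1 by simp
  hence "V \<noteq> 0" using j by auto
  have "\<forall>k>q ^ n - 1. coeff V k = 0"
  proof (intro allI impI)
    fix k assume "k > q ^ n - 1"
    moreover have "0 < q ^ n" using q_gt_1 by simp
    ultimately have "q ^ j' \<noteq> k" if "j' < n" for j'
      using that q_gt_1 power_strict_increasing[of j' n q] by linarith
    thus "coeff V k = 0" unfolding coeff_V by simp
  qed
  hence "degree V \<le> q ^ n - 1" by (rule degree_le)
  moreover have "0 < q ^ n" using q_gt_1 by simp
  ultimately have "degree V < q ^ n" by linarith
  moreover have "q ^ n \<le> degree V"
    using card_le_degree_if_roots[OF \<open>V \<noteq> 0\<close> vanish] card_Fq_span[OF ind] by simp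
  ultimately show False by simp
qed

lemma poly_Lambda_gr_generator:
  assumes ind: "Fq_lin_indep q n (g :: nat \<Rightarrow> 'a)" and l: "l < n"
  shows "poly (Lambda_gr q n g r) (g l) = r l"
proof -
  have "poly (Lambda_gr q n g r) (g l) =
      (\<Sum>i<n. (-1) ^ (n - 1 - i) * r i / det (moore q n g) * poly (det (Dmat q n g i)) (g l))"
    unfolding Lambda_gr_def by (simp add: poly_sum)
  also have "\<dots> = (\<Sum>i<n. if i = l then r l else 0)"
  proof (intro sum.cong refl)
    fix i assume i: "i \<in> {..<n}"
    have "((-1::'a) ^ (n - 1 - i)) * ((-1) ^ (n - 1 - i)) = 1"
      by (simp flip: power_mult_distrib)
    thus "(-1) ^ (n - 1 - i) * r i / det (moore q n g) * poly (det (Dmat q n g i)) (g l)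
        = (if i = l then r l else 0)"
      using i l det_moore_nonzero[OF ind] by (simp add: poly_det_Dmat_generator field_simps)
  qed
  also have "\<dots> = r l" using l by simp
  finally show ?thesis .
qed

lemma Pi_g_linearized_vanishing:
  assumes "Fq_lin_indep q n (g::nat \<Rightarrow> 'a)"
  shows "linearized q (Pi_g q n g)" "i < n \<Longrightarrow> poly (Pi_g q n g) (g i) = 0"
  unfolding Pi_g_eq_subspace_poly[OF assms]
  by (simp_all add: linearized_subspace_poly poly_subspace_poly_Fq_span Fq_span_generator)

lemma Mod_r_memD:
  assumes ind: "Fq_lin_indep q n (g::nat \<Rightarrow> 'a)" and "(x, y) \<in> Mod_r q n g r"
  shows "linearized q x \<and> linearized q y \<and> (\<forall>i<n. poly x (g i) + poly y (r i) = 0)"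
proof -
  obtain \<beta> \<gamma> where bg: "linearized q \<beta>" "linearized q \<gamma>"
    "(x, y) = ladd (lcomp \<beta> (Pi_g q n g, 0)) (lcomp \<gamma> (- Lambda_gr q n g r, [:0, 1:]))"
    using assms(2) unfolding Mod_r_def by blast
  have x: "x = \<beta> \<circ>\<^sub>p Pi_g q n g + \<gamma> \<circ>\<^sub>p (- Lambda_gr q n g r)" and y: "y = \<gamma>"
    using bg(3) pcompose_linearized_0[OF bg(1)] by (auto simp: ladd_def lcomp_def)
  have "linearized q x"
    unfolding x using bg Pi_g_linearized_vanishing[OF ind] linearized_Lambda_gr
    by (intro linearized_add linearized_pcompose linearized_uminus)
  moreover have "poly x (g i) + poly y (r i) = 0" if "i < n" for i
    unfolding x y using that Pi_g_linearized_vanishing(2)[OF ind] poly_Lambda_gr_generator[OF ind]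
      additive.zero[OF additive_poly_linearized[OF bg(1)]]
      additive.minus[OF additive_poly_linearized[OF bg(2)]]
    by (simp add: poly_pcompose)
  ultimately show ?thesis using bg(2) y by simp
qed

(* If E annihilates the errors m(g i) - r i, then E \<circ> (\<Lambda> - m) vanishes on all g i and is
   therefore a right multiple \<beta> \<circ> \<Pi>; this exhibits (- E \<circ> m, E) in M(r). *)

lemma error_locator_in_Mod_r:
  assumes ind: "Fq_lin_indep q n (g::nat \<Rightarrow> 'a)"
    and E: "linearized q E" and mm: "linearized q mm"
    and annihilates: "\<forall>i<n. poly E (poly mm (g i) - r i) = 0"
  shows "(- (E \<circ>\<^sub>p mm), E) \<in> Mod_r q n g r"
proof -
  define h where "h = E \<circ>\<^sub>p (Lambda_gr q n g r - mm)"
  have h: "linearized q h"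
    unfolding h_def using E mm linearized_Lambda_gr by (intro linearized_pcompose linearized_diff)
  have "poly h (g i) = 0" if "i < n" for i
    using that annihilates poly_Lambda_gr_generator[OF ind that]
      additive.diff[OF additive_poly_linearized[OF E], of "r i" "poly mm (g i)"]
      additive.minus[OF additive_poly_linearized[OF E], of "poly mm (g i) - r i"]
    by (simp add: h_def poly_pcompose)
  hence "\<forall>x\<in>Fq_span q n g. poly h x = 0"
    using poly_linearized_vanishes_on_Fq_span[OF h] by blast
  then obtain \<beta> where \<beta>: "linearized q \<beta>" "h = \<beta> \<circ>\<^sub>p Pi_g q n g"
    using subspace_poly_right_dvd[OF ind h] Pi_g_eq_subspace_poly[OF ind] by auto
  have "\<beta> \<circ>\<^sub>p Pi_g q n g = E \<circ>\<^sub>p Lambda_gr q n g r - E \<circ>\<^sub>p mm"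
    using \<beta>(2) additive.diff[OF additive_pcompose_linearized[OF E]] by (simp add: h_def)
  hence "\<beta> \<circ>\<^sub>p Pi_g q n g + E \<circ>\<^sub>p (- Lambda_gr q n g r) = - (E \<circ>\<^sub>p mm)"
    using additive.minus[OF additive_pcompose_linearized[OF E]] by simp
  moreover have "\<beta> \<circ>\<^sub>p 0 = 0" by (rule pcompose_linearized_0[OF \<beta>(1)])
  ultimately have "(- (E \<circ>\<^sub>p mm), E)
      = ladd (lcomp \<beta> (Pi_g q n g, 0)) (lcomp E (- Lambda_gr q n g r, [:0, 1:]))"
    by (simp add: ladd_def lcomp_def)
  thus ?thesis unfolding Mod_r_def using \<beta>(1) E by blast
qed

end

section \<open>The degree argument\<close>

context Fq_field
begin

lemma qdeg_pcompose_less: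
  assumes "linearized q (c::'a poly)" "linearized q h" "c = 0 \<or> h = 0 \<or> qdeg q c + qdeg q h < d"
  shows "c \<circ>\<^sub>p h = 0 \<or> qdeg q (c \<circ>\<^sub>p h) < d"
proof (cases "c = 0 \<or> h = 0")
  case True thus ?thesis using pcompose_linearized_0[OF assms(1)] by auto
next
  case False thus ?thesis using assms qdeg_pcompose[OF assms(1,2)] by auto
qed

(* The predictable leading term property of a pair with leading positions 1 and 2: the weighted
   q-degree of c1 \<circ> b1 + c2 \<circ> b2 is at least that of c1 \<circ> b1. *)

lemma qdeg_lincomb_ge_fst:
  fixes c1 c2 f1 f2 h1 h2 :: "'a poly"
  assumes lin: "linearized q c1" "linearized q c2" "linearized q f1" "linearized q f2"
      "linearized q h1" "linearized q h2"
    and "c1 \<noteq> 0" and f: "f1 \<noteq> 0" "f2 = 0 \<or> qdeg q f2 + k \<le> qdeg q f1"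
    and h: "h2 \<noteq> 0" "h1 = 0 \<or> qdeg q h1 < qdeg q h2 + k"
  shows "(c1 \<circ>\<^sub>p f1 + c2 \<circ>\<^sub>p h1 \<noteq> 0 \<and> qdeg q c1 + qdeg q f1 \<le> qdeg q (c1 \<circ>\<^sub>p f1 + c2 \<circ>\<^sub>p h1))
    \<or> (c1 \<circ>\<^sub>p f2 + c2 \<circ>\<^sub>p h2 \<noteq> 0 \<and> qdeg q c1 + qdeg q f1 < qdeg q (c1 \<circ>\<^sub>p f2 + c2 \<circ>\<^sub>p h2) + k)"
proof (cases "c2 = 0 \<or> qdeg q c2 + qdeg q h2 + k \<le> qdeg q c1 + qdeg q f1")
  case True
  have "c2 \<circ>\<^sub>p h1 = 0 \<or> qdeg q (c2 \<circ>\<^sub>p h1) < qdeg q (c1 \<circ>\<^sub>p f1)"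
    using True h(2) qdeg_pcompose[OF lin(1,3) \<open>c1 \<noteq> 0\<close> f(1)]
    by (intro qdeg_pcompose_less[OF lin(2,5)]) auto
  hence "c1 \<circ>\<^sub>p f1 + c2 \<circ>\<^sub>p h1 \<noteq> 0 \<and> qdeg q (c1 \<circ>\<^sub>p f1 + c2 \<circ>\<^sub>p h1) = qdeg q (c1 \<circ>\<^sub>p f1)"
    using lin \<open>c1 \<noteq> 0\<close> f(1)
    by (intro linearized_qdeg_add_dominant[OF q_gt_1] linearized_pcompose pcompose_linearized_nonzero)
  thus ?thesis using qdeg_pcompose[OF lin(1,3) \<open>c1 \<noteq> 0\<close> f(1)] by simp
next
  case False
  hence "c2 \<noteq> 0" by simp
  have "c1 \<circ>\<^sub>p f2 = 0 \<or> qdeg q (c1 \<circ>\<^sub>p f2) < qdeg q (c2 \<circ>\<^sub>p h2)"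
    using False f(2) qdeg_pcompose[OF lin(2,6) \<open>c2 \<noteq> 0\<close> h(1)]
    by (intro qdeg_pcompose_less[OF lin(1,4)]) auto
  hence "c2 \<circ>\<^sub>p h2 + c1 \<circ>\<^sub>p f2 \<noteq> 0 \<and> qdeg q (c2 \<circ>\<^sub>p h2 + c1 \<circ>\<^sub>p f2) = qdeg q (c2 \<circ>\<^sub>p h2)"
    using lin \<open>c2 \<noteq> 0\<close> h(1)
    by (intro linearized_qdeg_add_dominant[OF q_gt_1] linearized_pcompose pcompose_linearized_nonzero)
  thus ?thesis using False qdeg_pcompose[OF lin(2,6) \<open>c2 \<noteq> 0\<close> h(1)] by (simp add: add.commute)
qed

end

context Fqm_field
begin

(* Composing f1 + f2 \<circ> m with the subspace polynomial of the f2-image of the error space kills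
   every g i, since the value there is f2 (m(g i) - r i). *)

lemma Mod_r_qdeg_fst_lower_bound:
  assumes ind: "Fq_lin_indep q n (g::nat \<Rightarrow> 'a)" and "(f1, f2) \<in> Mod_r q n g r"
    and f: "f1 \<noteq> 0" "f2 = 0 \<or> qdeg q f2 + k \<le> qdeg q f1"
    and mm: "linearized q mm" "mm = 0 \<or> qdeg q mm < k"
    and err: "\<forall>i<n. poly mm (g i) - r i \<in> Fq_span q t v"
  shows "n \<le> qdeg q f1 + t"
proof -
  have lin: "linearized q f1" "linearized q f2" and on_g: "\<forall>i<n. poly f1 (g i) + poly f2 (r i) = 0"
    using Mod_r_memD[OF ind assms(2)] by auto
  define H where "H = f1 + f2 \<circ>\<^sub>p mm"
  have H: "linearized q H" unfolding H_def using lin mm by (intro linearized_add linearized_pcompose)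
  have "f2 \<circ>\<^sub>p mm = 0 \<or> qdeg q (f2 \<circ>\<^sub>p mm) < qdeg q f1"
    using f mm(2) by (intro qdeg_pcompose_less[OF lin(2) mm(1)]) auto
  hence "H \<noteq> 0 \<and> qdeg q H = qdeg q f1"
    unfolding H_def using lin mm by (intro linearized_qdeg_add_dominant[OF q_gt_1 lin(1) f(1)] linearized_pcompose)
  moreover define E where "E = subspace_poly q (\<lambda>j. poly f2 (v j)) t"
  have "poly (E \<circ>\<^sub>p H) (g i) = 0" if "i < n" for i
  proof -
    have "poly H (g i) = poly f2 (poly mm (g i) - r i)"
      using on_g that additive.diff[OF additive_poly_linearized[OF lin(2)]]
      by (simp add: H_def poly_pcompose eq_neg_iff_add_eq_0)
    thus ?thesis
      using poly_linearized_Fq_span[OF lin(2)] err that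
      by (simp add: E_def poly_pcompose poly_subspace_poly_Fq_span)
  qed
  hence "\<forall>x\<in>Fq_span q n g. poly (E \<circ>\<^sub>p H) x = 0"
    using poly_linearized_vanishes_on_Fq_span linearized_pcompose[OF linearized_subspace_poly H]
    unfolding E_def by blast
  ultimately show ?thesis
    using le_qdeg_if_vanishes_on_Fq_span[OF ind linearized_pcompose[OF linearized_subspace_poly H]]
      pcompose_linearized_nonzero[OF linearized_subspace_poly H subspace_poly_nonzero]
      qdeg_pcompose[OF linearized_subspace_poly H subspace_poly_nonzero] qdeg_subspace_poly
    unfolding E_def by (metis add.commute)
qed

(* The error locator (- E \<circ> m, E) of a closest message has weighted q-degree below
   t + k \<le> qdeg f1, so it is a multiple of b2 alone; this pins down b2. *)

lemma closest_message_from_basis: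
  fixes f1 f2 h1 h2 mm :: "'a poly"
  assumes ind: "Fq_lin_indep q n g" and "k \<le> n" "2 * t \<le> n - k"
    and b1: "(f1, f2) \<in> Mod_r q n g r" "f1 \<noteq> 0" "f2 = 0 \<or> qdeg q f2 + k \<le> qdeg q f1"
    and b2: "(h1, h2) \<in> Mod_r q n g r" "h2 \<noteq> 0" "h1 = 0 \<or> qdeg q h1 < qdeg q h2 + k"
    and span: "\<And>x y. (x, y) \<in> Mod_r q n g r \<Longrightarrow> \<exists>c1 c2. linearized q c1 \<and> linearized q c2
      \<and> x = c1 \<circ>\<^sub>p f1 + c2 \<circ>\<^sub>p h1 \<and> y = c1 \<circ>\<^sub>p f2 + c2 \<circ>\<^sub>p h2"
    and mm: "linearized q mm" "mm = 0 \<or> qdeg q mm < k"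
    and err: "\<forall>i<n. poly mm (g i) - r i \<in> Fq_span q t v"
  shows "qdeg q h2 + k \<le> qdeg q f1 \<and> h1 = - (h2 \<circ>\<^sub>p mm)"
proof -
  have lin: "linearized q f1" "linearized q f2" "linearized q h1" "linearized q h2"
    using Mod_r_memD[OF ind b1(1)] Mod_r_memD[OF ind b2(1)] by auto
  have "t + k \<le> qdeg q f1"
    using Mod_r_qdeg_fst_lower_bound[OF ind b1(1-3) mm err] assms(2,3) by linarith
  define E where "E = subspace_poly q v t"
  have E: "linearized q E" "E \<noteq> 0" "qdeg q E = t"
    unfolding E_def by (simp_all add: linearized_subspace_poly subspace_poly_nonzero qdeg_subspace_poly)
  have "(- (E \<circ>\<^sub>p mm), E) \<in> Mod_r q n g r"
    using err by (intro error_locator_in_Mod_r[OF ind E(1) mm(1)]) (simp add: E_def poly_subspace_poly_Fq_span)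
  then obtain c1 c2 where c: "linearized q c1" "linearized q c2"
      "- (E \<circ>\<^sub>p mm) = c1 \<circ>\<^sub>p f1 + c2 \<circ>\<^sub>p h1" "E = c1 \<circ>\<^sub>p f2 + c2 \<circ>\<^sub>p h2"
    using span by blast
  have Em: "E \<circ>\<^sub>p mm = 0 \<or> qdeg q (E \<circ>\<^sub>p mm) < t + k"
    using mm(2) E(3) by (intro qdeg_pcompose_less[OF E(1) mm(1)]) auto
  have "c1 = 0"
  proof (rule ccontr)
    assume "c1 \<noteq> 0"
    from qdeg_lincomb_ge_fst[OF c(1,2) lin this b1(2,3) b2(2,3)]
    have "(E \<circ>\<^sub>p mm \<noteq> 0 \<and> qdeg q f1 \<le> qdeg q (E \<circ>\<^sub>p mm)) \<or> qdeg q f1 < t + k"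
      unfolding c(3,4)[symmetric] qdeg_uminus E(3) by auto
    thus False using Em \<open>t + k \<le> qdeg q f1\<close> by linarith
  qed
  hence E_eq: "E = c2 \<circ>\<^sub>p h2" and Em_eq: "- (E \<circ>\<^sub>p mm) = c2 \<circ>\<^sub>p h1" using c(3,4) by simp_all
  hence "c2 \<noteq> 0" using E(2) by auto
  hence "t = qdeg q c2 + qdeg q h2" using E_eq E(3) qdeg_pcompose[OF c(2) lin(4) _ b2(2)] by simp
  hence deg: "qdeg q h2 + k \<le> qdeg q f1" using \<open>t + k \<le> qdeg q f1\<close> by simp
  have "c2 \<circ>\<^sub>p h1 = - (c2 \<circ>\<^sub>p (h2 \<circ>\<^sub>p mm))"
    using Em_eq by (simp add: E_eq pcompose_assoc)
  hence "c2 \<circ>\<^sub>p (h1 + h2 \<circ>\<^sub>p mm) = 0"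
    using additive.add[OF additive_pcompose_linearized[OF c(2)]] by simp
  moreover have "linearized q (h1 + h2 \<circ>\<^sub>p mm)"
    using lin mm(1) by (intro linearized_add linearized_pcompose)
  ultimately have "h1 + h2 \<circ>\<^sub>p mm = 0"
    using pcompose_linearized_nonzero[OF c(2) _ \<open>c2 \<noteq> 0\<close>] by blast
  thus ?thesis using deg by (simp add: eq_neg_iff_add_eq_0)
qed

end

section \<open>Running Algorithm 1\<close>

lemma lpos_eq_1_fst_leading:
  assumes "lpos q k (f1, f2) = 1" "(f1, f2) \<noteq> (0, 0)"
  shows "f1 \<noteq> 0 \<and> (f2 = 0 \<or> qdeg q f2 + k \<le> qdeg q f1) \<and> wqdeg q k (f1, f2) = qdeg q f1"
  using assms unfolding lpos_def wqdeg_def by (auto split: if_splits)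

lemma lpos_eq_2_snd_leading:
  assumes "lpos q k (h1, h2) = 2"
  shows "h2 \<noteq> 0 \<and> (h1 = 0 \<or> qdeg q h1 < qdeg q h2 + k)
    \<and> wqdeg q k (h1, h2) = int (qdeg q h2) + int k - 1"
  using assms unfolding lpos_def wqdeg_def by (auto split: if_splits)

lemma is_basis_pairD:
  fixes b1 b2 :: "'a::field lvec"
  assumes "is_basis q M {b1, b2}" "b1 \<noteq> b2"
  shows "b1 \<in> M" "b2 \<in> M" "b1 \<noteq> (0, 0)"
    and "\<And>x y. (x, y) \<in> M \<Longrightarrow> \<exists>c1 c2. linearized q c1 \<and> linearized q c2
      \<and> x = c1 \<circ>\<^sub>p fst b1 + c2 \<circ>\<^sub>p fst b2 \<and> y = c1 \<circ>\<^sub>p snd b1 + c2 \<circ>\<^sub>p snd b2"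
proof -
  have M: "M = {lcombo c {b1, b2} | c. \<forall>h\<in>{b1, b2}. linearized q (c h)}"
    and indep: "\<And>c. (\<forall>h\<in>{b1, b2}. linearized q (c h)) \<Longrightarrow> lcombo c {b1, b2} = (0, 0)
      \<Longrightarrow> (\<forall>h\<in>{b1, b2}. c h = 0)"
    using assms(1) unfolding is_basis_def by blast+
  have lcombo: "lcombo c {b1, b2}
      = (c b1 \<circ>\<^sub>p fst b1 + c b2 \<circ>\<^sub>p fst b2, c b1 \<circ>\<^sub>p snd b1 + c b2 \<circ>\<^sub>p snd b2)" for c
    using assms(2) by (simp add: lcombo_def)
  define e :: "'a lvec \<Rightarrow> 'a lvec \<Rightarrow> 'a poly"
    where "e b = (\<lambda>h. if h = b then [:0, 1:] else 0)" for b
  have e: "\<forall>h\<in>{b1, b2}. linearized q (e b h)" for b by (simp add: e_def linearized_pX)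
  have e1: "lcombo (e b1) {b1, b2} = b1" and e2: "lcombo (e b2) {b1, b2} = b2"
    using assms(2) by (simp_all add: lcombo e_def pcompose_pX_left)
  show "b1 \<in> M" unfolding M mem_Collect_eq using e e1 by (intro exI[of _ "e b1"]) simp
  show "b2 \<in> M" unfolding M mem_Collect_eq using e e2 by (intro exI[of _ "e b2"]) simp
  show "b1 \<noteq> (0, 0)"
  proof
    assume "b1 = (0, 0)"
    hence "lcombo (e b1) {b1, b2} = (0, 0)" using e1 by simp
    hence "e b1 b1 = 0" using indep[OF e] by blast
    thus False by (simp add: e_def)
  qed
  show "\<exists>c1 c2. linearized q c1 \<and> linearized q c2
      \<and> x = c1 \<circ>\<^sub>p fst b1 + c2 \<circ>\<^sub>p fst b2 \<and> y = c1 \<circ>\<^sub>p snd b1 + c2 \<circ>\<^sub>p snd b2" if "(x, y) \<in> M" for x y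
    using that unfolding M lcombo by auto
qed

lemma alg_cands_0_if_weight_less:
  assumes "1 < q" "l2 < l1"
  shows "alg_cands q l1 l2 0 = {(0 :: 'a::field poly, [:0, 1:])}"
proof -
  have "qdeg q [:0, 1::'a:] = 0" by (rule qdeg_eqI[OF assms(1)]) simp
  thus ?thesis using assms linearized_monic_qdeg_0[OF assms(1)]
    by (auto simp: alg_cands_def qdeg_le_def linearized_pX)
qed

context Fq_field
begin

lemma rank_dist_witness:
  "\<exists>v. \<forall>i<n. a i - b i \<in> Fq_span q (rank_dist q n a b) (v :: nat \<Rightarrow> 'a)"
  and rank_dist_le: "rank_dist q n (a :: nat \<Rightarrow> 'a) b \<le> n"
proof -
  define P where "P d \<longleftrightarrow> (\<exists>v. \<forall>i<n. a i - b i \<in> Fq_span q d (v :: nat \<Rightarrow> 'a))" for d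
  have "P n" unfolding P_def using Fq_span_generator[of _ n "\<lambda>i. a i - b i"] by blast
  hence "P (Least P)" "Least P \<le> n" by (rule LeastI, rule Least_le)
  moreover have "rank_dist q n a b = Least P" by (simp add: rank_dist_def P_def[abs_def])
  ultimately show "\<exists>v. \<forall>i<n. a i - b i \<in> Fq_span q (rank_dist q n a b) (v :: nat \<Rightarrow> 'a)"
    and "rank_dist q n a b \<le> n"
    unfolding P_def by simp_all
qed

lemma exists_closest_message:
  fixes g r :: "nat \<Rightarrow> 'a"
  assumes "t = Min ((\<lambda>c. rank_dist q n c r) ` gabidulin q k g)"
  shows "\<exists>mm. linearized q mm \<and> degree mm < q ^ k \<and> rank_dist q n (codeword g mm) r = t"
proof -
  have "(\<lambda>c. rank_dist q n c r) ` gabidulin q k g \<subseteq> {..n}"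
    using rank_dist_le by blast
  hence "finite ((\<lambda>c. rank_dist q n c r) ` gabidulin q k g)" by (rule finite_subset) simp
  moreover have "codeword g 0 \<in> gabidulin q k g"
    unfolding gabidulin_def using q_gt_1 by (intro CollectI exI[of _ 0]) simp
  ultimately have "t \<in> (\<lambda>c. rank_dist q n c r) ` gabidulin q k g"
    unfolding assms by (intro Min_in) auto
  thus ?thesis unfolding gabidulin_def by blast
qed

end

context Fqm_field
begin

lemma closest_message_decodes:
  fixes b1 b2 :: "'a lvec" and mm :: "'a poly"
  assumes ind: "Fq_lin_indep q n g" and "k \<le> n" "2 * t \<le> n - k"
    and basis: "minimal_basis q k (Mod_r q n g r) {b1, b2}" "lpos q k b1 = 1" "lpos q k b2 = 2"
    and mm: "linearized q mm" "degree mm < q ^ k" "rank_dist q n (codeword g mm) r = t"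
  shows "wqdeg q k b2 < wqdeg q k b1 \<and> fst b2 = - (snd b2 \<circ>\<^sub>p mm)"
proof -
  obtain f1 f2 where b1: "b1 = (f1, f2)" by (cases b1)
  obtain h1 h2 where b2: "b2 = (h1, h2)" by (cases b2)
  have "is_basis q (Mod_r q n g r) {b1, b2}" "b1 \<noteq> b2"
    using basis unfolding minimal_basis_def by auto
  note pair = is_basis_pairD[OF this, unfolded b1 b2 fst_conv snd_conv]
  have f: "f1 \<noteq> 0" "f2 = 0 \<or> qdeg q f2 + k \<le> qdeg q f1" "wqdeg q k b1 = qdeg q f1"
    using lpos_eq_1_fst_leading[OF basis(2)[unfolded b1] pair(3)] unfolding b1 by auto
  have h: "h2 \<noteq> 0" "h1 = 0 \<or> qdeg q h1 < qdeg q h2 + k" "wqdeg q k b2 = int (qdeg q h2) + int k - 1"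
    using lpos_eq_2_snd_leading[OF basis(3)[unfolded b2]] unfolding b2 by auto
  obtain v where err: "\<forall>i<n. poly mm (g i) - r i \<in> Fq_span q t v"
    using rank_dist_witness[of n "codeword g mm" r] mm(3) by (auto simp: codeword_def)
  have "mm = 0 \<or> qdeg q mm < k"
  proof (cases "mm = 0")
    case False
    hence "q ^ qdeg q mm < q ^ k" using mm(2) linearized_degree[OF q_gt_1 mm(1)] by simp
    thus ?thesis using power_less_imp_less_exp[OF q_gt_1] by blast
  qed simp
  from closest_message_from_basis[OF ind assms(2,3) pair(1) f(1,2) pair(2) h(1,2) pair(4) mm(1) this err]
  show ?thesis using f(3) h(3) unfolding b1 b2 by simp
qed

end

lemma CHAR_dvd_card_UNIV: "CHAR('a::{finite,comm_ring_1}) dvd card (UNIV :: 'a set)"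
proof -
  have "(\<Sum>x\<in>(UNIV::'a set). x) = (\<Sum>x\<in>UNIV. x + 1)"
    by (rule sum.reindex_bij_witness[of _ "\<lambda>y. y + 1" "\<lambda>y. y - 1"]) auto
  hence "of_nat (card (UNIV :: 'a set)) = (0::'a)" by (simp add: sum.distrib)
  thus ?thesis by (simp add: of_nat_eq_0_iff_char_dvd)
qed

lemma CHAR_eq_if_card_UNIV_prime_power:
  assumes "prime p" "card (UNIV :: 'a::{finite,field} set) = p ^ N"
  shows "CHAR('a) = p"
proof -
  have "prime CHAR('a)" by (simp add: prime_CHAR_semidom finite_imp_CHAR_pos)
  moreover have "CHAR('a) dvd p ^ N" using CHAR_dvd_card_UNIV assms(2) by metis
  ultimately show ?thesis using assms(1) prime_dvd_power primes_dvd_imp_eq by blast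
qed

theorem corollary34:
  fixes q m n k :: nat and g r :: "nat \<Rightarrow> 'a::{finite, field}"
    and b1 b2 :: "'a lvec" and t :: nat
  assumes "\<exists>p e. prime p \<and> e > 0 \<and> q = p ^ e"
    and "m \<ge> 1" and "card (UNIV :: 'a set) = q ^ m"
    and "1 \<le> k" and "k \<le> n"
    and "Fq_lin_indep q n g"
    and "t = Min ((\<lambda>c. rank_dist q n c r) ` gabidulin q k g)"
    and "2 * t \<le> n - k"
    and "minimal_basis q k (Mod_r q n g r) {b1, b2}"
    and "lpos q k b1 = 1" and "lpos q k b2 = 2"
  shows "card (alg_cands q (wqdeg q k b1) (wqdeg q k b2) 0) = 1
    \<and> alg_list q b1 b2 (wqdeg q k b1) (wqdeg q k b2) 0 \<noteq> {}
    \<and> (\<forall>mm. linearized q mm \<and> degree mm < q ^ k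
           \<and> rank_dist q n (codeword g mm) r = t
           \<longrightarrow> mm \<in> alg_list q b1 b2 (wqdeg q k b1) (wqdeg q k b2) 0)"
proof -
  obtain p e where p: "prime p" "0 < e" "q = p ^ e" using assms(1) by blast
  hence "CHAR('a) = p"
    using assms(3) by (intro CHAR_eq_if_card_UNIV_prime_power[where N = "e * m"]) (simp_all add: power_mult)
  then interpret Fqm_field q e "TYPE('a)" m
    using p assms(2,3) by unfold_locales simp_all
  note decodes = closest_message_decodes[OF assms(6,5,8-11)]
  obtain mm0 where mm0: "linearized q mm0" "degree mm0 < q ^ k" "rank_dist q n (codeword g mm0) r = t"
    using exists_closest_message[OF assms(7)] by blast
  note cands = alg_cands_0_if_weight_less[OF q_gt_1 conjunct1[OF decodes[OF mm0]]]
  have b2: "ladd (lcomp 0 b1) (lcomp [:0, 1:] b2) = b2"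
    by (simp add: ladd_def lcomp_def pcompose_pX_left)
  have "mm \<in> alg_list q b1 b2 (wqdeg q k b1) (wqdeg q k b2) 0"
    if "linearized q mm" "degree mm < q ^ k" "rank_dist q n (codeword g mm) r = t" for mm
    unfolding alg_list_def mem_Collect_eq using that(1) b2 conjunct2[OF decodes[OF that]]
    by (intro conjI bexI[of _ "(0, [:0, 1:])"]) (simp_all add: Let_def cands[where 'a = 'a])
  thus ?thesis using mm0 by (auto simp: cands)
qed

end
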